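(* Let $\Gamma$ be a game over an interval $I=[b,e]\subseteq[0,1]$ (in the setting described in the context), and let $l$ be a location with $l\notin L^{\mathrm{Goal}}$, $\mathrm{urg}(l)=0$, and at least one outgoing edge; assume that for every $l'$ with $(l,l')\in E$, the function $x\mapsto\mathrm{OptCost}(l',x)$ is a real-valued cost function on $I$. (i) If $l\in L^{\mathrm{Min}}$ and $h(x)=\min\{\mathrm{OptCost}(l',x):(l,l')\in E\}$, then for all $x\in I$, $\mathrm{OptCost}(l,x)=\mathrm{minC}(h,\pi(l))(x)$. (ii) If $l\in L^{\mathrm{Max}}$ and $h(x)=\max\{\mathrm{OptCost}(l',x):(l,l')\in E\}$, then for all $x\in I$, $\mathrm{OptCost}(l,x)=\mathrm{maxC}(h,\pi(l))(x)$.
   Context: Setting: a game $\Gamma$ over an interval $I=[b,e]\subseteq[0,1]$ consists of a finite set of locations $L=L^{\mathrm{Min}}\cup L^{\mathrm{Max}}$ (disjoint), goal locations $L^{\mathrm{Goal}}\subseteq L$ each assigned a cost function on $I$ (a continuous, non-increasing, piecewise affine function with finitely many pieces), an edge set $E\subseteq L\times L$ (all guards true, no resets, discrete transitions have price $0$), an urgency map $\mathrm{urg}:L\to\{0,1\}$ and price rates $\pi:L\to\mathbb{N}$. States are $L\times I$; discrete transitions $(l,x)\to(l',x)$ for $(l,l')\in E$ with price $0$; continuous transitions $(l,x)\xrightarrow{t}(l,x+t)$ for $t>0$, $\mathrm{urg}(l)=0$, $x+t\le e$, with price $\pi(l)t$. Runs are finite or infinite sequences of consecutive transitions, not containing infinitely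 many consecutive continuous transitions. Strategies of the minimizer (maximizer) map finite runs ending in states with location in $L^{\mathrm{Min}}$ ($L^{\mathrm{Max}}$) to an available transition; $\mathrm{Run}(s,\mu,\chi)$ is the unique resulting run. The cost of a run that first visits a goal location $l$ at state $(l,x)$ after $n$ transitions is (goal cost function of $l$)$(x)$ plus the sum of the prices of the first $n$ transitions, and $\infty$ if no goal location is visited. $\mathrm{OptCost}(s)=\inf_\mu\sup_\chi\mathrm{Cost}(\mathrm{Run}(s,\mu,\chi))$, assumed finite from every state. For $f:[b,e]\to\mathbb{R}$ and constant $c\ge0$: $\mathrm{minC}(f,c)(x)=\min_{0\le t\le e-x}(ct+f(x+t))$ and $\mathrm{maxC}(f,c)(x)=\max_{0\le t\le e-x}(ct+f(x+t))$. *)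

theory Defs
  imports Complex_Main "HOL-Library.Extended_Real"
begin

definition cost_function :: "real \<Rightarrow> real \<Rightarrow> (real \<Rightarrow> real) \<Rightarrow> bool" where
  "cost_function b e f \<longleftrightarrow>
     continuous_on {b..e} f \<and>
     (\<forall>x y. b \<le> x \<and> x \<le> y \<and> y \<le> e \<longrightarrow> f y \<le> f x) \<and>
     (\<exists>(n::nat) (a::nat \<Rightarrow> real). a 0 = b \<and> a n = e \<and> (\<forall>i<n. a i \<le> a (Suc i)) \<and>
        (\<forall>i<n. \<exists>\<alpha> \<beta>. \<forall>x\<in>{a i..a (Suc i)}. f x = \<alpha> * x + \<beta>))"

definition minC :: "real \<Rightarrow> (real \<Rightarrow> real) \<Rightarrow> real \<Rightarrow> real \<Rightarrow> real" where
  "minC e f c x = Inf ((\<lambda>t. c * t + f (x + t)) ` {0..e - x})"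

definition maxC :: "real \<Rightarrow> (real \<Rightarrow> real) \<Rightarrow> real \<Rightarrow> real \<Rightarrow> real" where
  "maxC e f c x = Sup ((\<lambda>t. c * t + f (x + t)) ` {0..e - x})"

text \<open>A game over the interval [lb, ub].  Urgency is a boolean (True = urgency 1).\<close>
record 'l game =
  Locs :: "'l set"
  LMin :: "'l set"
  LMax :: "'l set"
  Goal :: "'l set"
  gcost :: "'l \<Rightarrow> real \<Rightarrow> real"
  Edges :: "('l \<times> 'l) set"
  urgent :: "'l \<Rightarrow> bool"
  rate :: "'l \<Rightarrow> nat"
  lb :: real
  ub :: real

definition wf_game :: "'l game \<Rightarrow> bool" where
  "wf_game G \<longleftrightarrow> finite (Locs G) \<and> LMin G \<inter> LMax G = {} \<and> LMin G \<union> LMax G = Locs G \<and>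
     Goal G \<subseteq> Locs G \<and> Edges G \<subseteq> Locs G \<times> Locs G \<and>
     0 \<le> lb G \<and> lb G \<le> ub G \<and> ub G \<le> 1 \<and>
     (\<forall>l\<in>Goal G. cost_function (lb G) (ub G) (gcost G l))"

definition states :: "'l game \<Rightarrow> ('l \<times> real) set" where
  "states G = Locs G \<times> {lb G..ub G}"

datatype 'l trans = Disc 'l | Delay real

fun avail :: "'l game \<Rightarrow> 'l \<times> real \<Rightarrow> 'l trans \<Rightarrow> bool" where
  "avail G (l, x) (Disc l') = ((l, l') \<in> Edges G)"
| "avail G (l, x) (Delay t) = (0 < t \<and> \<not> urgent G l \<and> x + t \<le> ub G)"

fun tgt :: "'l \<times> real \<Rightarrow> 'l trans \<Rightarrow> 'l \<times> real" where
  "tgt (l, x) (Disc l') = (l', x)"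
| "tgt (l, x) (Delay t) = (l, x + t)"

fun price :: "'l game \<Rightarrow> 'l \<times> real \<Rightarrow> 'l trans \<Rightarrow> real" where
  "price G (l, x) (Disc l') = 0"
| "price G (l, x) (Delay t) = real (rate G l) * t"

fun last_st :: "'l \<times> real \<Rightarrow> 'l trans list \<Rightarrow> 'l \<times> real" where
  "last_st s [] = s"
| "last_st s (\<tau> # h) = last_st (tgt s \<tau>) h"

fun valid_run :: "'l game \<Rightarrow> 'l \<times> real \<Rightarrow> 'l trans list \<Rightarrow> bool" where
  "valid_run G s [] = True"
| "valid_run G s (\<tau> # h) = (avail G s \<tau> \<and> valid_run G (tgt s \<tau>) h)"

fun run_price :: "'l game \<Rightarrow> 'l \<times> real \<Rightarrow> 'l trans list \<Rightarrow> real" where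
  "run_price G s [] = 0"
| "run_price G s (\<tau> # h) = price G s \<tau> + run_price G (tgt s \<tau>) h"

definition has_move :: "'l game \<Rightarrow> 'l \<times> real \<Rightarrow> bool" where
  "has_move G s \<longleftrightarrow> (\<exists>\<tau>. avail G s \<tau>)"

type_synonym 'l strategy = "'l \<times> real \<Rightarrow> 'l trans list \<Rightarrow> 'l trans"

fun ext :: "'l strategy \<Rightarrow> 'l \<times> real \<Rightarrow> 'l trans list \<Rightarrow> nat \<Rightarrow> 'l trans list" where
  "ext \<sigma> s h 0 = h"
| "ext \<sigma> s h (Suc k) = ext \<sigma> s h k @ [\<sigma> s (ext \<sigma> s h k)]"

definition is_delay :: "'l trans \<Rightarrow> bool" where
  "is_delay \<tau> \<longleftrightarrow> (\<exists>t. \<tau> = Delay t)"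

text \<open>A strategy of the player owning locations P: on every finite run ending in a
  location of P from which a transition is available, it picks an available transition;
  and it never produces infinitely many consecutive continuous transitions (so the
  resulting sequence is always a run).\<close>
definition is_strategy :: "'l game \<Rightarrow> 'l set \<Rightarrow> 'l strategy \<Rightarrow> bool" where
  "is_strategy G P \<sigma> \<longleftrightarrow>
     (\<forall>s\<in>states G. \<forall>h. valid_run G s h \<and> fst (last_st s h) \<in> P \<and> has_move G (last_st s h)
         \<longrightarrow> avail G (last_st s h) (\<sigma> s h)) \<and>
     (\<forall>s\<in>states G. \<forall>h. valid_run G s h \<and> fst (last_st s h) \<in> P \<longrightarrow>
         (\<exists>k. \<not> (is_delay (\<sigma> s (ext \<sigma> s h k)) \<and>
                  avail G (last_st s (ext \<sigma> s h k)) (\<sigma> s (ext \<sigma> s h k)))))"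

text \<open>The first n transitions of Run(s, mu, chi) (fewer if the run is finite and shorter).\<close>
primrec outc :: "'l game \<Rightarrow> 'l strategy \<Rightarrow> 'l strategy \<Rightarrow> 'l \<times> real \<Rightarrow> nat \<Rightarrow> 'l trans list" where
  "outc G \<mu> \<chi> s 0 = []"
| "outc G \<mu> \<chi> s (Suc n) =
     (let h = outc G \<mu> \<chi> s n; s' = last_st s h in
      if has_move G s' then h @ [if fst s' \<in> LMin G then \<mu> s h else \<chi> s h] else h)"

definition visits_goal_at :: "'l game \<Rightarrow> 'l strategy \<Rightarrow> 'l strategy \<Rightarrow> 'l \<times> real \<Rightarrow> nat \<Rightarrow> bool" where
  "visits_goal_at G \<mu> \<chi> s n \<longleftrightarrow>
     length (outc G \<mu> \<chi> s n) = n \<and> fst (last_st s (outc G \<mu> \<chi> s n)) \<in> Goal G"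

definition run_cost :: "'l game \<Rightarrow> 'l \<times> real \<Rightarrow> 'l strategy \<Rightarrow> 'l strategy \<Rightarrow> ereal" where
  "run_cost G s \<mu> \<chi> =
     (if \<exists>n. visits_goal_at G \<mu> \<chi> s n then
        (let n = (LEAST n. visits_goal_at G \<mu> \<chi> s n); h = outc G \<mu> \<chi> s n; s' = last_st s h in
         ereal (gcost G (fst s') (snd s') + run_price G s h))
      else \<infinity>)"

definition OptCost :: "'l game \<Rightarrow> 'l \<times> real \<Rightarrow> ereal" where
  "OptCost G s = (INF \<mu>\<in>{\<mu>. is_strategy G (LMin G) \<mu>}.
                    SUP \<chi>\<in>{\<chi>. is_strategy G (LMax G) \<chi>}. run_cost G s \<mu> \<chi>)"

end

theory Submission
  imports Defs "HOL-Library.Sublist"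
begin

(*
  Every play from (l, x) first delays in l and then
  takes one edge (l, l') at some time y in [x, ub] (an "exit path"); afterwards the game
  continues from (l', y).  The equations therefore follow from four inequalities:

    - the owner of l can commit to "delay t, then take the edge to l'" and afterwards play
      any strategy from (l', x + t)   (Min_commit_bound, Max_commit_bound);
    - whatever the owner does, it leaves l along an exit path, and the opponent can wait
      for that and then answer (epsilon-)optimally from the exit state
      (Min_exit_bound, Max_exit_bound).

  The four bounds say that OptCost(l, x) is the greatest lower bound (least upper bound) of
  the values whose minimum (maximum) is minC (maxC); cInf_eq_non_empty and
  cSup_eq_non_empty then give the equations, and lemma4 combines both cases.
*)

subsection \<open>Finite runs\<close>

lemma last_st_append [simp]: "last_st s (a @ b) = last_st (last_st s a) b"
  by (induction a arbitrary: s) auto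

lemma valid_run_append [simp]:
  "valid_run G s (a @ b) \<longleftrightarrow> valid_run G s a \<and> valid_run G (last_st s a) b"
  by (induction a arbitrary: s) auto

lemma run_price_append [simp]:
  "run_price G s (a @ b) = run_price G s a + run_price G (last_st s a) b"
  by (induction a arbitrary: s) auto

lemma tgt_states:
  assumes "wf_game G" "s \<in> states G" "avail G s \<tau>"
  shows "tgt s \<tau> \<in> states G"
  using assms by (cases s; cases \<tau>) (auto simp: states_def wf_game_def)

lemma last_st_states:
  assumes "wf_game G" "s \<in> states G" "valid_run G s h"
  shows "last_st s h \<in> states G"
  using assms(2,3) by (induction h arbitrary: s) (simp_all add: tgt_states[OF assms(1)])

lemma valid_run_next_avail:
  assumes "valid_run G s q" "strict_prefix h q"
  shows "avail G (last_st s h) (q ! length h)"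
proof -
  obtain a r where "q = h @ a # r"
    using assms(2) by (metis append_Nil2 neq_Nil_conv prefixE strict_prefix_def)
  then show ?thesis using assms(1) by simp
qed

lemma has_move_edge: "(fst s, l') \<in> Edges G \<Longrightarrow> has_move G s"
  by (cases s) (auto simp: has_move_def intro: exI[of _ "Disc l'"])

lemma delays_stay:
  "list_all is_delay h \<Longrightarrow> fst (last_st (l, x) h) = l \<and>
     run_price G (l, x) h = real (rate G l) * (snd (last_st (l, x) h) - x)"
proof (induction h arbitrary: x)
  case (Cons a h)
  then obtain t where "a = Delay t" by (auto simp: is_delay_def)
  with Cons.prems Cons.IH[of "x + t"] show ?case by (simp add: algebra_simps)
qed simp

lemma delays_nondecreasing:
  "list_all is_delay h \<Longrightarrow> valid_run G (l, x) h \<Longrightarrow> x \<le> snd (last_st (l, x) h)"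
proof (induction h arbitrary: x)
  case (Cons a h)
  then obtain t where "a = Delay t" "0 < t" "x + t \<le> snd (last_st (l, x + t) h)"
    by (auto simp: is_delay_def)
  then show ?case by simp
qed simp

definition exit_path :: "'l game \<Rightarrow> 'l \<times> real \<Rightarrow> 'l trans list \<Rightarrow> bool" where
  "exit_path G s q \<longleftrightarrow>
     valid_run G s q \<and> q \<noteq> [] \<and> \<not> is_delay (last q) \<and> list_all is_delay (butlast q)"

lemma exit_path_end:
  assumes "exit_path G (l, x) q"
  obtains l' y where "last_st (l, x) q = (l', y)" "(l, l') \<in> Edges G" "x \<le> y"
    "run_price G (l, x) q = real (rate G l) * (y - x)"
    "\<forall>i<length q. fst (last_st (l, x) (take i q)) = l"
proof -
  obtain ds \<tau> where q: "q = ds @ [\<tau>]"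
    using assms unfolding exit_path_def by (metis append_butlast_last_id)
  with assms have ds: "list_all is_delay ds" "valid_run G (l, x) ds" and \<tau>: "\<not> is_delay \<tau>"
    "avail G (last_st (l, x) ds) \<tau>" by (auto simp: exit_path_def)
  obtain y where y: "last_st (l, x) ds = (l, y)"
    using delays_stay[OF ds(1)] by (metis prod.collapse)
  obtain l' where l': "\<tau> = Disc l'" using \<tau>(1) by (cases \<tau>) (auto simp: is_delay_def)
  show ?thesis
  proof (rule that[of l' y])
    show "last_st (l, x) q = (l', y)" "(l, l') \<in> Edges G" using q y l' \<tau>(2) by auto
    show "x \<le> y" using delays_nondecreasing[OF ds] y by simp
    show "run_price G (l, x) q = real (rate G l) * (y - x)"
      using delays_stay[OF ds(1)] q y l' by simp
    have "list_all is_delay (take i ds)" for i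
      using ds(1) by (metis append_take_drop_id list_all_append)
    then have "fst (last_st (l, x) (take i ds)) = l" for i
      using delays_stay[of "take i ds" l x G] by blast
    then show "\<forall>i<length q. fst (last_st (l, x) (take i q)) = l"
      using q by (auto simp: less_Suc_eq_le)
  qed
qed

definition commit_path :: "real \<Rightarrow> 'l \<Rightarrow> 'l trans list" where
  "commit_path t l' = (if t = 0 then [Disc l'] else [Delay t, Disc l'])"

lemma commit_path:
  assumes "(l, l') \<in> Edges G" "\<not> urgent G l" "0 \<le> t" "x + t \<le> ub G"
  shows "exit_path G (l, x) (commit_path t l')" "last_st (l, x) (commit_path t l') = (l', x + t)"
    "run_price G (l, x) (commit_path t l') = real (rate G l) * t"
  using assms by (auto simp: commit_path_def exit_path_def is_delay_def)


subsection \<open>Strategies\<close>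

definition stops_delaying :: "'l game \<Rightarrow> 'l strategy \<Rightarrow> 'l \<times> real \<Rightarrow> 'l trans list \<Rightarrow> bool" where
  "stops_delaying G \<sigma> s h \<longleftrightarrow>
     (\<exists>k. \<not> (is_delay (\<sigma> s (ext \<sigma> s h k)) \<and> avail G (last_st s (ext \<sigma> s h k)) (\<sigma> s (ext \<sigma> s h k))))"

lemma is_strategyI:
  assumes "\<And>s h. s \<in> states G \<Longrightarrow> valid_run G s h \<Longrightarrow> fst (last_st s h) \<in> P \<Longrightarrow>
             has_move G (last_st s h) \<Longrightarrow> avail G (last_st s h) (\<sigma> s h)"
    and "\<And>s h. s \<in> states G \<Longrightarrow> valid_run G s h \<Longrightarrow> fst (last_st s h) \<in> P \<Longrightarrow>
             stops_delaying G \<sigma> s h"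
  shows "is_strategy G P \<sigma>"
  using assms unfolding is_strategy_def stops_delaying_def by blast

lemma is_strategy_avail:
  assumes "is_strategy G P \<sigma>" "s \<in> states G" "valid_run G s h" "fst (last_st s h) \<in> P"
    "has_move G (last_st s h)"
  shows "avail G (last_st s h) (\<sigma> s h)"
  using assms unfolding is_strategy_def by blast

lemma is_strategy_stops:
  assumes "is_strategy G P \<sigma>" "s \<in> states G" "valid_run G s h" "fst (last_st s h) \<in> P"
  shows "stops_delaying G \<sigma> s h"
  using assms unfolding is_strategy_def stops_delaying_def by blast

lemma ext_prefix: "prefix h (ext \<sigma> s h k)"
  by (induction k) auto

lemma length_ext [simp]: "length (ext \<sigma> s h k) = length h + k"
  by (induction k) auto

lemma ext_take: "j \<le> n \<Longrightarrow> ext \<sigma> s h j = take (length h + j) (ext \<sigma> s h n)"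
proof (induction n rule: dec_induct)
  case (step n)
  then show ?case by (simp add: le_Suc_eq)
qed simp

lemma ext_agree:
  assumes "\<And>j. \<sigma> s (ext \<sigma> s h j) = \<tau> s (ext \<sigma> s h j)"
  shows "ext \<sigma> s h j = ext \<tau> s h j"
proof (induction j)
  case (Suc j)
  then show ?case using assms[of j] by simp
qed simp

lemma stops_delaying_after_prefix:
  assumes "\<And>j. ext \<sigma> s h j = p @ ext \<tau> (last_st s p) h' j"
  shows "stops_delaying G \<sigma> s h \<longleftrightarrow> stops_delaying G \<tau> (last_st s p) h'"
proof -
  have "\<sigma> s (ext \<sigma> s h k) = \<tau> (last_st s p) (ext \<tau> (last_st s p) h' k)" for k
    using assms[of "Suc k"] assms[of k] by simp
  moreover have "last_st s (ext \<sigma> s h k) = last_st (last_st s p) (ext \<tau> (last_st s p) h' k)" for k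
    using assms[of k] by simp
  ultimately show ?thesis unfolding stops_delaying_def by simp
qed

corollary stops_delaying_agree:
  "(\<And>j. ext \<sigma> s h j = ext \<tau> s h j) \<Longrightarrow> stops_delaying G \<sigma> s h \<longleftrightarrow> stops_delaying G \<tau> s h"
  using stops_delaying_after_prefix[of \<sigma> s h "[]" \<tau> h G] by simp

definition default_strategy :: "'l game \<Rightarrow> 'l strategy" where
  "default_strategy G s h = (case last_st s h of (l, x) \<Rightarrow>
     if \<exists>l'. (l, l') \<in> Edges G then Disc (SOME l'. (l, l') \<in> Edges G) else Delay (ub G - x))"

lemma default_strategy:
  fixes G :: "'l game"
  shows "is_strategy G P (default_strategy G)"
proof (rule is_strategyI)
  fix s h assume move: "has_move G (last_st s h)"
  obtain l x where lx: "last_st s h = (l, x)" by fastforce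
  from move obtain \<tau> where \<tau>: "avail G (l, x) \<tau>" using lx by (auto simp: has_move_def)
  show "avail G (last_st s h) (default_strategy G s h)"
  proof (cases "\<exists>l'. (l, l') \<in> Edges G")
    case True
    then show ?thesis using lx by (simp add: default_strategy_def) (metis someI_ex)
  next
    case False
    with \<tau> have "\<not> urgent G l" "x < ub G" by (cases \<tau>; auto)+
    then show ?thesis using lx False by (simp add: default_strategy_def)
  qed
next
  fix s :: "'l \<times> real" and h
  let ?d = "default_strategy G"
  obtain l x where lx: "last_st s h = (l, x)" by fastforce
  consider "\<exists>l'. (l, l') \<in> Edges G" | "\<nexists>l'. (l, l') \<in> Edges G" "avail G (l, x) (Delay (ub G - x))"
    | "\<nexists>l'. (l, l') \<in> Edges G" "\<not> avail G (l, x) (Delay (ub G - x))"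
    by blast
  then show "stops_delaying G ?d s h"
  proof cases
    case 1
    then have "\<not> is_delay (?d s (ext ?d s h 0))" using lx by (simp add: default_strategy_def is_delay_def)
    then show ?thesis unfolding stops_delaying_def by blast
  next
    case 2
    then have "\<not> avail G (last_st s (ext ?d s h 1)) (?d s (ext ?d s h 1))"
      using lx by (simp add: default_strategy_def)
    then show ?thesis unfolding stops_delaying_def by blast
  next
    case 3
    then have "\<not> avail G (last_st s (ext ?d s h 0)) (?d s (ext ?d s h 0))"
      using lx by (simp add: default_strategy_def)
    then show ?thesis unfolding stops_delaying_def by blast
  qed
qed

definition follow_prefix :: "'l \<times> real \<Rightarrow> 'l trans list \<Rightarrow> 'l strategy \<Rightarrow> 'l strategy" where
  "follow_prefix s0 q \<sigma> s h = (if s = s0 \<and> strict_prefix h q then q ! length h else \<sigma> s h)"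

lemma follow_prefix_ext:
  assumes "prefix h q" "length h + j \<le> length q"
  shows "ext (follow_prefix s0 q \<sigma>) s0 h j = take (length h + j) q"
  using assms(2)
proof (induction j)
  case 0
  then show ?case using assms(1) by (auto simp: prefix_def)
next
  case (Suc j)
  have "strict_prefix (take (length h + j) q) q"
    using Suc.prems by (simp add: strict_prefix_def take_is_prefix)
  then show ?case using Suc by (simp add: follow_prefix_def take_Suc_conv_app_nth min_def)
qed

lemma follow_prefix_strategy:
  assumes \<sigma>: "is_strategy G P \<sigma>" and q: "valid_run G s0 q" "q \<noteq> []" "\<not> is_delay (last q)"
  shows "is_strategy G P (follow_prefix s0 q \<sigma>)"
proof (rule is_strategyI)
  fix s h assume "s \<in> states G" "valid_run G s h" "fst (last_st s h) \<in> P" "has_move G (last_st s h)"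
  then show "avail G (last_st s h) (follow_prefix s0 q \<sigma> s h)"
    using valid_run_next_avail[OF q(1)] is_strategy_avail[OF \<sigma>] by (simp add: follow_prefix_def)
next
  fix s h assume s: "s \<in> states G" "valid_run G s h" "fst (last_st s h) \<in> P"
  let ?f = "follow_prefix s0 q \<sigma>"
  show "stops_delaying G ?f s h"
  proof (cases "s = s0 \<and> strict_prefix h q")
    case True
    define j where "j = length q - 1 - length h"
    have len: "length h + j = length q - 1" "length q - 1 < length q"
      using True q(2) prefix_length_less unfolding j_def by fastforce+
    then have "ext ?f s h j = take (length q - 1) q"
      using follow_prefix_ext[of h q j s0 \<sigma>] True by (simp add: strict_prefix_def)
    moreover have "strict_prefix (take (length q - 1) q) q"
      using len by (simp add: strict_prefix_def take_is_prefix)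
    then have "?f s (take (length q - 1) q) = last q"
      using True len q(2) by (simp add: follow_prefix_def last_conv_nth)
    ultimately show ?thesis using q(3) unfolding stops_delaying_def by metis
  next
    case False
    have "?f s (ext ?f s h j) = \<sigma> s (ext ?f s h j)" for j
      using False by (auto simp: follow_prefix_def dest: prefix_order.le_less_trans[OF ext_prefix])
    then show ?thesis
      using stops_delaying_agree[OF ext_agree] is_strategy_stops[OF \<sigma> s] by blast
  qed
qed

definition prefix_free :: "'a list set \<Rightarrow> bool" where
  "prefix_free Q \<longleftrightarrow> (\<forall>q1\<in>Q. \<forall>q2\<in>Q. prefix q1 q2 \<longrightarrow> q1 = q2)"

lemma prefix_free_unique:
  "prefix_free Q \<Longrightarrow> q1 \<in> Q \<Longrightarrow> q2 \<in> Q \<Longrightarrow> prefix q1 h \<Longrightarrow> prefix q2 h \<Longrightarrow> q1 = q2"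
  unfolding prefix_free_def by (metis prefix_same_cases)

definition graft :: "'l \<times> real \<Rightarrow> 'l trans list set \<Rightarrow> ('l trans list \<Rightarrow> 'l strategy) \<Rightarrow>
    'l strategy \<Rightarrow> 'l strategy" where
  "graft s0 Q \<tau> \<sigma> s h = (if s = s0 \<and> (\<exists>q\<in>Q. prefix q h)
     then (let q = THE q. q \<in> Q \<and> prefix q h in \<tau> q (last_st s0 q) (drop (length q) h))
     else \<sigma> s h)"

lemma graft_after:
  assumes "prefix_free Q" "q \<in> Q"
  shows "graft s0 Q \<tau> \<sigma> s0 (q @ h) = \<tau> q (last_st s0 q) h"
proof -
  have "q' = q" if "q' \<in> Q" "prefix q' (q @ h)" for q'
    using prefix_free_unique[OF assms(1) that(1) assms(2) that(2)] by simp
  then have "(THE q'. q' \<in> Q \<and> prefix q' (q @ h)) = q"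
    using assms(2) by (intro the_equality) auto
  then show ?thesis using assms(2) by (auto simp: graft_def)
qed

lemma graft_before: "\<not> (s = s0 \<and> (\<exists>q\<in>Q. prefix q h)) \<Longrightarrow> graft s0 Q \<tau> \<sigma> s h = \<sigma> s h"
  unfolding graft_def by (rule if_not_P)

text \<open>If the solo play of a grafted strategy enters Q only later, the transition completing
  the element of Q is its last one, which is not a delay.\<close>
lemma graft_stops_on_entry:
  assumes Q: "\<forall>q\<in>Q. q \<noteq> [] \<and> \<not> is_delay (last q)"
    and outside: "\<not> (\<exists>q\<in>Q. prefix q h)"
    and enters: "\<exists>j. \<exists>q\<in>Q. prefix q (ext (graft s0 Q \<tau> \<sigma>) s0 h j)"
  shows "stops_delaying G (graft s0 Q \<tau> \<sigma>) s0 h"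
proof -
  let ?g = "graft s0 Q \<tau> \<sigma>"
  let ?P = "\<lambda>j. \<exists>q\<in>Q. prefix q (ext ?g s0 h j)"
  define j0 where "j0 = (LEAST j. ?P j)"
  have j0: "?P j0"
    unfolding j0_def using enters by (rule LeastI_ex)
  have "j0 \<noteq> 0" using j0 outside by (intro notI) simp
  then obtain j1 where j1: "j0 = Suc j1" using not0_implies_Suc by blast
  let ?E = "ext ?g s0 h j1"
  have before: "\<not> ?P j1"
    using not_less_Least[of j1 ?P] j1 unfolding j0_def by simp
  obtain q where q: "q \<in> Q" "prefix q (?E @ [?g s0 ?E])"
    using j0 unfolding j1 by auto
  with before have "q = ?E @ [?g s0 ?E]" by (auto simp: prefix_snoc)
  then have "last q = ?g s0 ?E" by simp
  then have "\<not> is_delay (?g s0 ?E)" using Q q(1) by metis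
  then show ?thesis unfolding stops_delaying_def by blast
qed

lemma graft_after_prefix:
  assumes wf: "wf_game G" and s0: "s0 \<in> states G" and pf: "prefix_free Q"
    and Q: "\<forall>q\<in>Q. valid_run G s0 q" and h: "valid_run G s0 h" "prefix q h" "q \<in> Q"
  obtains r where "h = q @ r" "last_st s0 q \<in> states G" "valid_run G (last_st s0 q) r"
    "last_st s0 h = last_st (last_st s0 q) r"
    "\<And>r'. graft s0 Q \<tau> \<sigma> s0 (q @ r') = \<tau> q (last_st s0 q) r'"
  using last_st_states[OF wf s0] Q h graft_after[OF pf h(3)] by (auto simp: prefix_def)

text \<open>The solo play of a grafted strategy stops delaying: either it already plays some \<tau> q,
  or it enters Q later (with a non-delay), or it coincides with the solo play of \<sigma>.\<close>
lemma graft_stops_delaying: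
  assumes wf: "wf_game G" and s0: "s0 \<in> states G" and \<sigma>: "is_strategy G P \<sigma>"
    and \<tau>: "\<forall>q\<in>Q. is_strategy G P (\<tau> q)"
    and Q: "\<forall>q\<in>Q. valid_run G s0 q \<and> q \<noteq> [] \<and> \<not> is_delay (last q)" and pf: "prefix_free Q"
    and h: "s \<in> states G" "valid_run G s h" "fst (last_st s h) \<in> P"
  shows "stops_delaying G (graft s0 Q \<tau> \<sigma>) s h" (is "stops_delaying G ?g s h")
proof (cases "s = s0 \<and> (\<exists>q\<in>Q. prefix q h)")
  case True
  then obtain q where q: "q \<in> Q" "prefix q h" and s: "s = s0" by blast
  obtain r where r: "h = q @ r" "last_st s0 q \<in> states G" "valid_run G (last_st s0 q) r"
    "last_st s0 h = last_st (last_st s0 q) r"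
    "\<And>r'. ?g s0 (q @ r') = \<tau> q (last_st s0 q) r'"
    using graft_after_prefix[OF wf s0 pf _ _ q(2,1)] Q h(2) s by blast
  have "ext ?g s h j = q @ ext (\<tau> q) (last_st s0 q) r j" for j
    using r(1,5) s by (induction j) auto
  moreover have "stops_delaying G (\<tau> q) (last_st s0 q) r"
    using is_strategy_stops[of G P "\<tau> q", OF _ r(2,3)] \<tau> q(1) r(4) h(3) s by simp
  ultimately show ?thesis using stops_delaying_after_prefix[of ?g s h q "\<tau> q" r G] s by simp
next
  case outside: False
  show ?thesis
  proof (cases "s = s0 \<and> (\<exists>j. \<exists>q\<in>Q. prefix q (ext ?g s h j))")
    case True
    then have "s = s0" "\<exists>j. \<exists>q\<in>Q. prefix q (ext ?g s0 h j)" by auto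
    then show ?thesis using graft_stops_on_entry[of Q h s0 \<tau> \<sigma> G] Q outside by auto
  next
    case False
    then have "?g s (ext ?g s h j) = \<sigma> s (ext ?g s h j)" for j by (intro graft_before) blast
    then have "ext ?g s h j = ext \<sigma> s h j" for j by (rule ext_agree)
    then have "stops_delaying G ?g s h \<longleftrightarrow> stops_delaying G \<sigma> s h" by (rule stops_delaying_agree)
    then show ?thesis using is_strategy_stops[OF \<sigma> h] by simp
  qed
qed

text \<open>Grafting preserves being a strategy, provided the grafted prefixes end with a discrete
  transition (so that grafting cannot prolong a sequence of delays forever).\<close>
lemma graft_strategy:
  assumes wf: "wf_game G" and s0: "s0 \<in> states G" and \<sigma>: "is_strategy G P \<sigma>"
    and \<tau>: "\<forall>q\<in>Q. is_strategy G P (\<tau> q)"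
    and Q: "\<forall>q\<in>Q. valid_run G s0 q \<and> q \<noteq> [] \<and> \<not> is_delay (last q)" and pf: "prefix_free Q"
  shows "is_strategy G P (graft s0 Q \<tau> \<sigma>)"
proof (rule is_strategyI)
  let ?g = "graft s0 Q \<tau> \<sigma>"
  fix s h assume h: "s \<in> states G" "valid_run G s h" "fst (last_st s h) \<in> P"
    and move: "has_move G (last_st s h)"
  show "avail G (last_st s h) (?g s h)"
  proof (cases "s = s0 \<and> (\<exists>q\<in>Q. prefix q h)")
    case True
    then obtain q where q: "q \<in> Q" "prefix q h" and s: "s = s0" by blast
    obtain r where r: "h = q @ r" "last_st s0 q \<in> states G" "valid_run G (last_st s0 q) r"
      "last_st s0 h = last_st (last_st s0 q) r"
      "\<And>r'. ?g s0 (q @ r') = \<tau> q (last_st s0 q) r'"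
      using graft_after_prefix[OF wf s0 pf _ _ q(2,1)] Q h(2) s by blast
    show ?thesis
      using is_strategy_avail[of G P "\<tau> q", OF _ r(2,3)] \<tau> q(1) r h(3) s move by simp
  next
    case False
    then show ?thesis using graft_before[OF False] is_strategy_avail[OF \<sigma> h move] by simp
  qed
next
  fix s h assume "s \<in> states G" "valid_run G s h" "fst (last_st s h) \<in> P"
  then show "stops_delaying G (graft s0 Q \<tau> \<sigma>) s h"
    using graft_stops_delaying[OF wf s0 \<sigma> \<tau> Q pf] by blast
qed

definition shifted :: "'l \<times> real \<Rightarrow> 'l trans list \<Rightarrow> 'l strategy \<Rightarrow> 'l strategy \<Rightarrow> 'l strategy" where
  "shifted s0 q \<sigma> d s h = (if s = last_st s0 q then \<sigma> s0 (q @ h) else d s h)"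

lemma shifted_strategy:
  assumes \<sigma>: "is_strategy G P \<sigma>" and d: "is_strategy G P d"
    and q: "valid_run G s0 q" and s0: "s0 \<in> states G"
  shows "is_strategy G P (shifted s0 q \<sigma> d)"
proof (rule is_strategyI)
  fix s h assume h: "s \<in> states G" "valid_run G s h" "fst (last_st s h) \<in> P"
  let ?f = "shifted s0 q \<sigma> d"
  show "has_move G (last_st s h) \<Longrightarrow> avail G (last_st s h) (?f s h)"
    using is_strategy_avail[OF \<sigma> s0, of "q @ h"] is_strategy_avail[OF d h] q h
    by (auto simp: shifted_def)
  show "stops_delaying G ?f s h"
  proof (cases "s = last_st s0 q")
    case True
    have "ext \<sigma> s0 (q @ h) j = q @ ext ?f (last_st s0 q) h j" for j
      by (induction j) (auto simp: shifted_def)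
    then have "stops_delaying G \<sigma> s0 (q @ h) \<longleftrightarrow> stops_delaying G ?f (last_st s0 q) h"
      by (rule stops_delaying_after_prefix)
    then show ?thesis using is_strategy_stops[OF \<sigma> s0, of "q @ h"] q h True by simp
  next
    case False
    then have "ext ?f s h j = ext d s h j" for j by (intro ext_agree) (simp add: shifted_def)
    then have "stops_delaying G ?f s h \<longleftrightarrow> stops_delaying G d s h" by (rule stops_delaying_agree)
    then show ?thesis using is_strategy_stops[OF d h] by simp
  qed
qed

definition committed :: "'l game \<Rightarrow> 'l \<times> real \<Rightarrow> 'l trans list \<Rightarrow> 'l strategy \<Rightarrow> 'l strategy" where
  "committed G s0 q \<sigma> = graft s0 {q} (\<lambda>_. \<sigma>) (follow_prefix s0 q (default_strategy G))"

lemma committed_strategy: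
  assumes "wf_game G" "s0 \<in> states G" "is_strategy G P \<sigma>"
    and "valid_run G s0 q" "q \<noteq> []" "\<not> is_delay (last q)"
  shows "is_strategy G P (committed G s0 q \<sigma>)"
  unfolding committed_def using assms
  by (intro graft_strategy follow_prefix_strategy default_strategy) (auto simp: prefix_free_def)

lemma committed_after: "committed G s0 q \<sigma> s0 (q @ h) = \<sigma> (last_st s0 q) h"
  unfolding committed_def by (rule graft_after) (auto simp: prefix_free_def)

lemma committed_ext:
  "j \<le> length q \<Longrightarrow> ext (committed G s0 q \<sigma>) s0 [] j = take j q"
proof (induction j)
  case (Suc j)
  then have "\<not> prefix q (take j q)" "strict_prefix (take j q) q"
    by (auto simp: strict_prefix_def take_is_prefix dest: prefix_length_le)
  then show ?case
    using Suc by (simp add: committed_def graft_before follow_prefix_def take_Suc_conv_app_nth)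
qed simp

text \<open>No exit path is a proper prefix of another: its last transition would be a delay.\<close>
lemma exit_paths_prefix_free: "prefix_free {q. exit_path G s q}"
  unfolding prefix_free_def
proof (intro ballI impI)
  fix q1 q2 assume q: "q1 \<in> {q. exit_path G s q}" "q2 \<in> {q. exit_path G s q}" "prefix q1 q2"
  show "q1 = q2"
  proof (rule ccontr)
    assume "q1 \<noteq> q2"
    with q(3) obtain r where r: "q2 = q1 @ r" "r \<noteq> []" by (auto simp: prefix_def)
    then have "butlast q2 = q1 @ butlast r" by (simp add: butlast_append)
    then have "list_all is_delay q1" using q(2) by (simp add: exit_path_def)
    then show False using q(1) last_in_set by (fastforce simp: exit_path_def list_all_iff)
  qed
qed

lemma exit_graft_strategy:
  assumes wf: "wf_game G" and s0: "s0 \<in> states G"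
    and \<tau>: "\<forall>s\<in>states G. is_strategy G P (\<tau> s)"
  shows "is_strategy G P (graft s0 {q. exit_path G s0 q} (\<lambda>q. \<tau> (last_st s0 q)) (default_strategy G))"
proof (rule graft_strategy[OF wf s0 default_strategy _ _ exit_paths_prefix_free])
  show "\<forall>q\<in>{q. exit_path G s0 q}. is_strategy G P (\<tau> (last_st s0 q))"
    using \<tau> last_st_states[OF wf s0] by (simp add: exit_path_def)
  show "\<forall>q\<in>{q. exit_path G s0 q}. valid_run G s0 q \<and> q \<noteq> [] \<and> \<not> is_delay (last q)"
    by (simp add: exit_path_def)
qed

text \<open>Whatever a strategy of the owner of l does from (l, x), its solo play leaves l along an
  exit path: it cannot delay forever, and the transition ending the delays is available.\<close>
lemma strategy_exit_path:
  assumes \<sigma>: "is_strategy G P \<sigma>" and s0: "(l, x) \<in> states G" and lP: "l \<in> P"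
    and e: "(l, l0) \<in> Edges G"
  obtains q where "exit_path G (l, x) q" "\<forall>j\<le>length q. ext \<sigma> (l, x) [] j = take j q"
proof -
  let ?E = "ext \<sigma> (l, x) []"
  let ?B = "\<lambda>k. \<not> (is_delay (\<sigma> (l, x) (?E k)) \<and> avail G (last_st (l, x) (?E k)) (\<sigma> (l, x) (?E k)))"
  have "\<exists>k. ?B k" using is_strategy_stops[OF \<sigma> s0, of "[]"] lP by (simp add: stops_delaying_def)
  define k where "k = (LEAST k. ?B k)"
  have Bk: "?B k" unfolding k_def using \<open>\<exists>k. ?B k\<close> by (rule LeastI_ex)
  have delays: "list_all is_delay (?E j) \<and> valid_run G (l, x) (?E j)" if "j \<le> k" for j
    using that
  proof (induction j)
    case (Suc j)
    then have "\<not> ?B j" unfolding k_def by (intro not_less_Least) simp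
    then show ?case using Suc by simp
  qed simp
  obtain y where y: "last_st (l, x) (?E k) = (l, y)"
    using delays_stay[of "?E k" l x G] delays[of k] by (metis order.refl prod.collapse)
  have "avail G (last_st (l, x) (?E k)) (\<sigma> (l, x) (?E k))"
    by (rule is_strategy_avail[OF \<sigma> s0])
      (use delays[of k] y lP has_move_edge[of "(l, y)" l0 G] e in auto)
  then have "avail G (l, y) (\<sigma> (l, x) (?E k))" using y by simp
  moreover obtain l' where l': "\<sigma> (l, x) (?E k) = Disc l'"
    using Bk y calculation by (cases "\<sigma> (l, x) (?E k)") (auto simp: is_delay_def)
  ultimately have q: "?E (Suc k) = ?E k @ [Disc l']" "(l, l') \<in> Edges G" by simp_all
  show ?thesis
  proof (rule that[of "?E (Suc k)"])
    show "exit_path G (l, x) (?E (Suc k))"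
      using q delays[of k] y by (simp add: exit_path_def is_delay_def)
    show "\<forall>j\<le>length (?E (Suc k)). ?E j = take j (?E (Suc k))"
    proof (intro allI impI)
      fix j assume "j \<le> length (?E (Suc k))"
      then show "?E j = take j (?E (Suc k))" using ext_take[of j "Suc k" \<sigma> "(l, x)" "[]"] by simp
    qed
  qed
qed


subsection \<open>Outcomes and their costs\<close>

lemma outc_length_le: "length (outc G \<mu> \<chi> s n) \<le> n"
  by (induction n) (auto simp: Let_def)

lemma outc_extends:
  assumes "i \<le> m"
  shows "\<exists>r. outc G \<mu> \<chi> s m = outc G \<mu> \<chi> s i @ r \<and> length r \<le> m - i"
  using assms
proof (induction m rule: dec_induct)
  case (step m)
  then obtain r where r: "outc G \<mu> \<chi> s m = outc G \<mu> \<chi> s i @ r" "length r \<le> m - i" by blast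
  have "\<exists>r'. outc G \<mu> \<chi> s (Suc m) = outc G \<mu> \<chi> s m @ r' \<and> length r' \<le> 1"
    by (auto simp: Let_def)
  then obtain r' where "outc G \<mu> \<chi> s (Suc m) = outc G \<mu> \<chi> s m @ r'" "length r' \<le> 1"
    by blast
  with r step.hyps show ?case by (intro exI[of _ "r @ r'"]) auto
qed simp

lemma outc_take:
  assumes "length (outc G \<mu> \<chi> s m) = m" "i \<le> m"
  shows "outc G \<mu> \<chi> s i = take i (outc G \<mu> \<chi> s m)"
proof -
  obtain r where r: "outc G \<mu> \<chi> s m = outc G \<mu> \<chi> s i @ r" "length r \<le> m - i"
    using outc_extends[OF assms(2)] by blast
  with assms outc_length_le[of G \<mu> \<chi> s i] have "length (outc G \<mu> \<chi> s i) = i" by auto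
  then show ?thesis using r by simp
qed

lemma outc_after_prefix:
  assumes "outc G \<mu> \<chi> s m = q"
    and "\<And>h. \<mu>' (last_st s q) h = \<mu> s (q @ h)" "\<And>h. \<chi>' (last_st s q) h = \<chi> s (q @ h)"
  shows "outc G \<mu> \<chi> s (m + n) = q @ outc G \<mu>' \<chi>' (last_st s q) n"
  using assms by (induction n) (auto simp: Let_def)

lemma Least_after:
  fixes m :: nat
  assumes "\<forall>i<m. \<not> P i" "\<exists>n. P (m + n)"
  shows "(LEAST n. P n) = m + (LEAST n. P (m + n))"
proof (rule Least_equality)
  show "P (m + (LEAST n. P (m + n)))" using assms(2) by (rule LeastI_ex)
next
  fix y assume "P y"
  with assms(1) have "m \<le> y" by (meson not_le)
  with \<open>P y\<close> have "(LEAST n. P (m + n)) \<le> y - m" by (intro Least_le) simp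
  with \<open>m \<le> y\<close> show "m + (LEAST n. P (m + n)) \<le> y" by simp
qed

lemma run_cost_after_prefix:
  assumes oq: "outc G \<mu> \<chi> s (length q) = q"
    and ng: "\<forall>i<length q. fst (last_st s (take i q)) \<notin> Goal G"
    and \<mu>': "\<And>h. \<mu>' (last_st s q) h = \<mu> s (q @ h)" and \<chi>': "\<And>h. \<chi>' (last_st s q) h = \<chi> s (q @ h)"
  shows "run_cost G s \<mu> \<chi> = ereal (run_price G s q) + run_cost G (last_st s q) \<mu>' \<chi>'"
proof -
  let ?m = "length q" and ?s' = "last_st s q"
  have split: "outc G \<mu> \<chi> s (?m + n) = q @ outc G \<mu>' \<chi>' ?s' n" for n
    by (rule outc_after_prefix[where \<mu>'=\<mu>' and \<chi>'=\<chi>', OF oq \<mu>' \<chi>'])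
  have vis: "visits_goal_at G \<mu> \<chi> s (?m + n) \<longleftrightarrow> visits_goal_at G \<mu>' \<chi>' ?s' n" for n
    unfolding visits_goal_at_def split by simp
  have early: "\<forall>i<?m. \<not> visits_goal_at G \<mu> \<chi> s i"
    using outc_take[of G \<mu> \<chi> s ?m] oq ng by (simp add: visits_goal_at_def)
  have shifted_ex: "(\<exists>n. visits_goal_at G \<mu> \<chi> s n) \<longleftrightarrow> (\<exists>n. visits_goal_at G \<mu>' \<chi>' ?s' n)"
    using early vis by (metis le_add_diff_inverse not_le)
  show ?thesis
  proof (cases "\<exists>n. visits_goal_at G \<mu>' \<chi>' ?s' n")
    case True
    define N where "N = (LEAST n. visits_goal_at G \<mu>' \<chi>' ?s' n)"
    have "(LEAST n. visits_goal_at G \<mu> \<chi> s n) = ?m + N"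
      unfolding N_def using Least_after[OF early] vis True by simp
    then show ?thesis using True shifted_ex split[of N] by (simp add: run_cost_def Let_def N_def)
  next
    case False
    then show ?thesis using shifted_ex by (simp add: run_cost_def)
  qed
qed

definition plays_alone :: "'l game \<Rightarrow> 'l strategy \<Rightarrow> 'l \<times> real \<Rightarrow> 'l trans list \<Rightarrow> bool" where
  "plays_alone G \<sigma> s q \<longleftrightarrow> (\<forall>j\<le>length q. ext \<sigma> s [] j = take j q) \<and>
     (\<forall>i<length q. fst (last_st s (take i q)) = fst s \<and> has_move G (last_st s (take i q)))"

lemma plays_alone_exit_path:
  assumes "exit_path G (l, x) q" "(l, l0) \<in> Edges G" "\<forall>j\<le>length q. ext \<sigma> (l, x) [] j = take j q"
  shows "plays_alone G \<sigma> (l, x) q"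
proof -
  have "fst (last_st (l, x) (take i q)) = l" if "i < length q" for i
    using exit_path_end[OF assms(1)] that by blast
  then show ?thesis
    using assms(2,3) has_move_edge[of "last_st (l, x) (take _ q)" l0 G] unfolding plays_alone_def by auto
qed

lemma committed_plays_alone:
  "exit_path G (l, x) q \<Longrightarrow> (l, l0) \<in> Edges G \<Longrightarrow> plays_alone G (committed G (l, x) q \<sigma>) (l, x) q"
  by (rule plays_alone_exit_path) (simp_all add: committed_ext)

lemma outc_plays_alone:
  assumes alone: "plays_alone G \<sigma> s q"
    and owner: "fst s \<in> LMin G \<Longrightarrow> \<sigma> = \<mu>" "fst s \<notin> LMin G \<Longrightarrow> \<sigma> = \<chi>"
  shows "outc G \<mu> \<chi> s (length q) = q"
proof -
  have "outc G \<mu> \<chi> s j = take j q" if "j \<le> length q" for j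
    using that
  proof (induction j)
    case (Suc j)
    then have loc: "fst (last_st s (take j q)) = fst s" "has_move G (last_st s (take j q))"
      using alone unfolding plays_alone_def by auto
    have "ext \<sigma> s [] j @ [\<sigma> s (ext \<sigma> s [] j)] = take (Suc j) q" "ext \<sigma> s [] j = take j q"
      using alone Suc.prems unfolding plays_alone_def by (metis Suc_leD ext.simps(2))+
    then have "\<sigma> s (take j q) = q ! j" using Suc.prems by (simp add: take_Suc_conv_app_nth)
    then show ?case using Suc loc owner by (auto simp: Let_def take_Suc_conv_app_nth)
  qed simp
  then show ?thesis by simp
qed

lemma run_cost_plays_alone:
  assumes "plays_alone G \<sigma> s q" "fst s \<in> LMin G \<Longrightarrow> \<sigma> = \<mu>" "fst s \<notin> LMin G \<Longrightarrow> \<sigma> = \<chi>"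
    and "fst s \<notin> Goal G"
    and "\<And>h. \<mu>' (last_st s q) h = \<mu> s (q @ h)" "\<And>h. \<chi>' (last_st s q) h = \<chi> s (q @ h)"
  shows "run_cost G s \<mu> \<chi> = ereal (run_price G s q) + run_cost G (last_st s q) \<mu>' \<chi>'"
  using assms(1,4-6) by (intro run_cost_after_prefix outc_plays_alone[OF assms(1-3)])
    (auto simp: plays_alone_def)


subsection \<open>Bounds on the optimal cost at a location\<close>

abbreviation Min_strategies :: "'l game \<Rightarrow> 'l strategy set" where
  "Min_strategies G \<equiv> {\<mu>. is_strategy G (LMin G) \<mu>}"

abbreviation Max_strategies :: "'l game \<Rightarrow> 'l strategy set" where
  "Max_strategies G \<equiv> {\<chi>. is_strategy G (LMax G) \<chi>}"

lemma Max_strategies_nonempty: "Max_strategies G \<noteq> {}"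
  using default_strategy by blast

lemma OptCost_finite:
  "\<forall>s\<in>states G. \<bar>OptCost G s\<bar> \<noteq> \<infinity> \<Longrightarrow> s \<in> states G \<Longrightarrow>
     OptCost G s = ereal (real_of_ereal (OptCost G s))"
  by (simp add: ereal_real')

lemma ereal_le_add_INF:
  fixes c :: real and a :: ereal
  assumes "\<And>i. i \<in> I \<Longrightarrow> a \<le> ereal c + f i"
  shows "a \<le> ereal c + (INF i\<in>I. f i)"
proof (cases a)
  case (real r)
  have "ereal (r - c) \<le> f i" if "i \<in> I" for i
    using assms[OF that] real by (cases "f i") auto
  then have "ereal (r - c) \<le> (INF i\<in>I. f i)" by (rule INF_greatest)
  then show ?thesis using real by (cases "INF i\<in>I. f i") auto
next
  case PInf
  have "\<infinity> \<le> f i" if "i \<in> I" for i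
    using assms[OF that] PInf by (cases "f i") auto
  then have "\<infinity> \<le> (INF i\<in>I. f i)" by (rule INF_greatest)
  then show ?thesis using PInf by simp
qed simp

text \<open>Min can commit to waiting t and then moving to l'; from (l', x + t) it plays as it likes.\<close>
lemma Min_commit_bound:
  assumes wf: "wf_game G" and s0: "(l, x) \<in> states G"
    and l: "l \<in> LMin G" "l \<notin> Goal G" "\<not> urgent G l"
    and e: "(l, l') \<in> Edges G" and t: "0 \<le> t" "x + t \<le> ub G"
  shows "OptCost G (l, x) \<le> ereal (real (rate G l) * t) + OptCost G (l', x + t)"
proof -
  define q where "q = commit_path t l'"
  note q = commit_path[OF e l(3) t, folded q_def]
  have qv: "valid_run G (l, x) q" "q \<noteq> []" "\<not> is_delay (last q)"
    using q(1) by (auto simp: exit_path_def)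
  let ?c = "real (rate G l) * t" and ?d = "default_strategy G"
  have "OptCost G (l, x) \<le> ereal ?c + (SUP \<chi>\<in>Max_strategies G. run_cost G (l', x + t) \<mu>' \<chi>)"
    if \<mu>': "\<mu>' \<in> Min_strategies G" for \<mu>'
  proof -
    let ?\<mu> = "committed G (l, x) q \<mu>'"
    have \<mu>: "?\<mu> \<in> Min_strategies G" using committed_strategy[OF wf s0 _ qv] \<mu>' by simp
    have alone: "plays_alone G ?\<mu> (l, x) q"
      using committed_plays_alone[OF q(1) e] .
    have "OptCost G (l, x) \<le> (SUP \<chi>\<in>Max_strategies G. run_cost G (l, x) ?\<mu> \<chi>)"
      unfolding OptCost_def using \<mu> by (rule INF_lower)
    also have "\<dots> \<le> ereal ?c + (SUP \<chi>\<in>Max_strategies G. run_cost G (l', x + t) \<mu>' \<chi>)"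
    proof (rule SUP_least)
      fix \<chi> assume \<chi>: "\<chi> \<in> Max_strategies G"
      let ?\<chi>' = "shifted (l, x) q \<chi> ?d"
      have "run_cost G (l, x) ?\<mu> \<chi> = ereal (run_price G (l, x) q) + run_cost G (last_st (l, x) q) \<mu>' ?\<chi>'"
        by (rule run_cost_plays_alone[OF alone]) (use l in \<open>auto simp: committed_after shifted_def\<close>)
      also have "\<dots> = ereal ?c + run_cost G (l', x + t) \<mu>' ?\<chi>'" using q(2,3) by simp
      also have "\<dots> \<le> ereal ?c + (SUP \<chi>\<in>Max_strategies G. run_cost G (l', x + t) \<mu>' \<chi>)"
        using shifted_strategy[OF _ default_strategy qv(1) s0] \<chi>
        by (intro add_left_mono SUP_upper) auto
      finally show "run_cost G (l, x) ?\<mu> \<chi> \<le> \<dots>" .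
    qed
    finally show ?thesis .
  qed
  then show ?thesis unfolding OptCost_def[of G "(l', x + t)"] by (rule ereal_le_add_INF)
qed

text \<open>Max can commit to waiting t and then moving to l'; from (l', x + t) it plays as it likes.\<close>
lemma Max_commit_bound:
  assumes wf: "wf_game G" and s0: "(l, x) \<in> states G"
    and l: "l \<in> LMax G" "l \<notin> Goal G" "\<not> urgent G l"
    and e: "(l, l') \<in> Edges G" and t: "0 \<le> t" "x + t \<le> ub G"
  shows "ereal (real (rate G l) * t) + OptCost G (l', x + t) \<le> OptCost G (l, x)"
proof -
  define q where "q = commit_path t l'"
  note q = commit_path[OF e l(3) t, folded q_def]
  have qv: "valid_run G (l, x) q" "q \<noteq> []" "\<not> is_delay (last q)"
    using q(1) by (auto simp: exit_path_def)
  have not_Min: "l \<notin> LMin G" using wf l(1) unfolding wf_game_def by blast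
  let ?c = "real (rate G l) * t" and ?d = "default_strategy G"
  show ?thesis unfolding OptCost_def[of G "(l, x)"]
  proof (rule INF_greatest)
    fix \<mu> assume \<mu>: "\<mu> \<in> Min_strategies G"
    let ?\<mu>' = "shifted (l, x) q \<mu> ?d"
    have "ereal ?c + OptCost G (l', x + t) \<le>
        ereal ?c + (SUP \<chi>\<in>Max_strategies G. run_cost G (l', x + t) ?\<mu>' \<chi>)"
      using shifted_strategy[OF _ default_strategy qv(1) s0] \<mu> unfolding OptCost_def
      by (intro add_left_mono INF_lower) auto
    also have "\<dots> = (SUP \<chi>\<in>Max_strategies G. ereal ?c + run_cost G (l', x + t) ?\<mu>' \<chi>)"
      by (rule SUP_ereal_add_right[symmetric]) (use Max_strategies_nonempty in auto)
    also have "\<dots> \<le> (SUP \<chi>\<in>Max_strategies G. run_cost G (l, x) \<mu> \<chi>)"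
    proof (rule SUP_least)
      fix \<chi>' assume \<chi>': "\<chi>' \<in> Max_strategies G"
      let ?\<chi> = "committed G (l, x) q \<chi>'"
      have \<chi>: "?\<chi> \<in> Max_strategies G" using committed_strategy[OF wf s0 _ qv] \<chi>' by simp
      have alone: "plays_alone G ?\<chi> (l, x) q"
        using committed_plays_alone[OF q(1) e] .
      have "run_cost G (l, x) \<mu> ?\<chi> = ereal (run_price G (l, x) q) + run_cost G (last_st (l, x) q) ?\<mu>' \<chi>'"
        by (rule run_cost_plays_alone[OF alone]) (use not_Min l in \<open>auto simp: committed_after shifted_def\<close>)
      then have "ereal ?c + run_cost G (l', x + t) ?\<mu>' \<chi>' = run_cost G (l, x) \<mu> ?\<chi>"
        using q(2,3) by simp
      also have "\<dots> \<le> (SUP \<chi>\<in>Max_strategies G. run_cost G (l, x) \<mu> \<chi>)"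
        using \<chi> by (rule SUP_upper)
      finally show "ereal ?c + run_cost G (l', x + t) ?\<mu>' \<chi>' \<le> \<dots>" .
    qed
    finally show "ereal ?c + OptCost G (l', x + t) \<le> \<dots>" .
  qed
qed


text \<open>Whatever Min does at l, it leaves l along an exit path to some (l', y); Max can wait for
  that and then play from (l', y) as it likes.\<close>
lemma Min_exit_bound:
  assumes wf: "wf_game G" and s0: "(l, x) \<in> states G" and l: "l \<in> LMin G" "l \<notin> Goal G"
    and e: "(l, l0) \<in> Edges G" and fin: "\<forall>s\<in>states G. \<bar>OptCost G s\<bar> \<noteq> \<infinity>"
    and bound: "\<And>l' y. (l, l') \<in> Edges G \<Longrightarrow> x \<le> y \<Longrightarrow> y \<le> ub G \<Longrightarrow>
                  m \<le> real (rate G l) * (y - x) + real_of_ereal (OptCost G (l', y))"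
  shows "ereal m \<le> OptCost G (l, x)"
  unfolding OptCost_def[of G "(l, x)"]
proof (rule INF_greatest)
  fix \<mu> assume \<mu>: "\<mu> \<in> Min_strategies G"
  obtain q where q: "exit_path G (l, x) q" "\<forall>j\<le>length q. ext \<mu> (l, x) [] j = take j q"
    using strategy_exit_path[of G "LMin G" \<mu> l x l0] \<mu> s0 l(1) e by blast
  obtain l' y where y: "last_st (l, x) q = (l', y)" "(l, l') \<in> Edges G" "x \<le> y"
    "run_price G (l, x) q = real (rate G l) * (y - x)"
    using exit_path_end[OF q(1)] by blast
  have qv: "valid_run G (l, x) q" "q \<noteq> []" "\<not> is_delay (last q)"
    using q(1) by (auto simp: exit_path_def)
  have s': "(l', y) \<in> states G" using last_st_states[OF wf s0 qv(1)] y(1) by simp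
  have alone: "plays_alone G \<mu> (l, x) q" using plays_alone_exit_path[OF q(1) e] q(2) .
  let ?c = "real (rate G l) * (y - x)" and ?\<mu>' = "shifted (l, x) q \<mu> (default_strategy G)"
  have "ereal m \<le> ereal (?c + real_of_ereal (OptCost G (l', y)))"
    using bound[OF y(2,3)] s' by (simp add: states_def)
  also have "\<dots> = ereal ?c + OptCost G (l', y)"
    using OptCost_finite[OF fin s'] by (metis plus_ereal.simps(1))
  also have "\<dots> \<le> ereal ?c + (SUP \<chi>\<in>Max_strategies G. run_cost G (l', y) ?\<mu>' \<chi>)"
    using shifted_strategy[OF _ default_strategy qv(1) s0] \<mu> unfolding OptCost_def
    by (intro add_left_mono INF_lower) auto
  also have "\<dots> = (SUP \<chi>\<in>Max_strategies G. ereal ?c + run_cost G (l', y) ?\<mu>' \<chi>)"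
    by (rule SUP_ereal_add_right[symmetric]) (use Max_strategies_nonempty in auto)
  also have "\<dots> \<le> (SUP \<chi>\<in>Max_strategies G. run_cost G (l, x) \<mu> \<chi>)"
  proof (rule SUP_least)
    fix \<chi>' assume \<chi>': "\<chi>' \<in> Max_strategies G"
    let ?\<chi> = "committed G (l, x) q \<chi>'"
    have "run_cost G (l, x) \<mu> ?\<chi> = ereal (run_price G (l, x) q) + run_cost G (last_st (l, x) q) ?\<mu>' \<chi>'"
      by (rule run_cost_plays_alone[OF alone]) (use l in \<open>auto simp: committed_after shifted_def\<close>)
    then have "ereal ?c + run_cost G (l', y) ?\<mu>' \<chi>' = run_cost G (l, x) \<mu> ?\<chi>"
      using y by simp
    also have "\<dots> \<le> (SUP \<chi>\<in>Max_strategies G. run_cost G (l, x) \<mu> \<chi>)"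
      using committed_strategy[OF wf s0 _ qv] \<chi>' by (intro SUP_upper) simp
    finally show "ereal ?c + run_cost G (l', y) ?\<mu>' \<chi>' \<le> \<dots>" .
  qed
  finally show "ereal m \<le> \<dots>" .
qed

lemma near_optimal_Min_strategies:
  assumes fin: "\<forall>s\<in>states G. \<bar>OptCost G s\<bar> \<noteq> \<infinity>" and \<epsilon>: "0 < \<epsilon>"
  obtains opt where "\<forall>s\<in>states G. opt s \<in> Min_strategies G \<and>
    (SUP \<chi>\<in>Max_strategies G. run_cost G s (opt s) \<chi>) \<le> OptCost G s + ereal \<epsilon>"
proof -
  have "\<exists>\<mu>. \<mu> \<in> Min_strategies G \<and>
      (SUP \<chi>\<in>Max_strategies G. run_cost G s \<mu> \<chi>) \<le> OptCost G s + ereal \<epsilon>"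
    if "s \<in> states G" for s
  proof -
    have "OptCost G s < OptCost G s + ereal \<epsilon>"
      using fin that \<epsilon> by (cases "OptCost G s") auto
    then show ?thesis unfolding OptCost_def[of G s] by (auto simp: INF_less_iff less_imp_le)
  qed
  then have "\<forall>s\<in>states G. \<exists>\<mu>. \<mu> \<in> Min_strategies G \<and>
      (SUP \<chi>\<in>Max_strategies G. run_cost G s \<mu> \<chi>) \<le> OptCost G s + ereal \<epsilon>" by blast
  from bchoice[OF this] show ?thesis using that by blast
qed

text \<open>Whatever Max does at l, it leaves l along an exit path to some (l', y); Min can wait for
  that and then play \<epsilon>-optimally from (l', y).\<close>
lemma Max_exit_bound:
  assumes wf: "wf_game G" and s0: "(l, x) \<in> states G" and l: "l \<in> LMax G" "l \<notin> Goal G"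
    and e: "(l, l0) \<in> Edges G" and fin: "\<forall>s\<in>states G. \<bar>OptCost G s\<bar> \<noteq> \<infinity>"
    and bound: "\<And>l' y. (l, l') \<in> Edges G \<Longrightarrow> x \<le> y \<Longrightarrow> y \<le> ub G \<Longrightarrow>
                  real (rate G l) * (y - x) + real_of_ereal (OptCost G (l', y)) \<le> M"
    and \<epsilon>: "0 < \<epsilon>"
  shows "OptCost G (l, x) \<le> ereal (M + \<epsilon>)"
proof -
  obtain opt where opt: "\<forall>s\<in>states G. opt s \<in> Min_strategies G \<and>
      (SUP \<chi>\<in>Max_strategies G. run_cost G s (opt s) \<chi>) \<le> OptCost G s + ereal \<epsilon>"
    using near_optimal_Min_strategies[OF fin \<epsilon>] by blast
  have not_Min: "l \<notin> LMin G" using wf l(1) unfolding wf_game_def by blast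
  let ?\<mu> = "graft (l, x) {q. exit_path G (l, x) q} (\<lambda>q. opt (last_st (l, x) q)) (default_strategy G)"
  have "?\<mu> \<in> Min_strategies G" using exit_graft_strategy[OF wf s0] opt by simp
  then have "OptCost G (l, x) \<le> (SUP \<chi>\<in>Max_strategies G. run_cost G (l, x) ?\<mu> \<chi>)"
    unfolding OptCost_def by (rule INF_lower)
  also have "\<dots> \<le> ereal (M + \<epsilon>)"
  proof (rule SUP_least)
    fix \<chi> assume \<chi>: "\<chi> \<in> Max_strategies G"
    obtain q where q: "exit_path G (l, x) q" "\<forall>j\<le>length q. ext \<chi> (l, x) [] j = take j q"
      using strategy_exit_path[of G "LMax G" \<chi> l x l0] \<chi> s0 l(1) e by blast
    obtain l' y where y: "last_st (l, x) q = (l', y)" "(l, l') \<in> Edges G" "x \<le> y"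
      "run_price G (l, x) q = real (rate G l) * (y - x)"
      using exit_path_end[OF q(1)] by blast
    have qv: "valid_run G (l, x) q" using q(1) by (simp add: exit_path_def)
    have s': "(l', y) \<in> states G" using last_st_states[OF wf s0 qv] y(1) by simp
    have alone: "plays_alone G \<chi> (l, x) q" using plays_alone_exit_path[OF q(1) e] q(2) .
    let ?c = "real (rate G l) * (y - x)" and ?\<chi>' = "shifted (l, x) q \<chi> (default_strategy G)"
    have "run_cost G (l, x) ?\<mu> \<chi> = ereal (run_price G (l, x) q) + run_cost G (last_st (l, x) q) (opt (l', y)) ?\<chi>'"
      by (rule run_cost_plays_alone[OF alone])
        (use not_Min l q(1) y(1) in \<open>auto simp: graft_after[OF exit_paths_prefix_free] shifted_def\<close>)
    also have "\<dots> = ereal ?c + run_cost G (l', y) (opt (l', y)) ?\<chi>'" using y(1,4) by simp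
    also have "\<dots> \<le> ereal ?c + (SUP \<chi>\<in>Max_strategies G. run_cost G (l', y) (opt (l', y)) \<chi>)"
      using shifted_strategy[OF _ default_strategy qv s0] \<chi> by (intro add_left_mono SUP_upper) simp
    also have "\<dots> \<le> ereal ?c + (OptCost G (l', y) + ereal \<epsilon>)"
      using opt s' by (intro add_left_mono) blast
    also have "\<dots> = ereal (?c + real_of_ereal (OptCost G (l', y)) + \<epsilon>)"
      using OptCost_finite[OF fin s'] by (metis plus_ereal.simps(1) add.assoc)
    also have "\<dots> \<le> ereal (M + \<epsilon>)"
      using bound[OF y(2,3)] s' by (simp add: states_def)
    finally show "run_cost G (l, x) ?\<mu> \<chi> \<le> ereal (M + \<epsilon>)" .
  qed
  finally show ?thesis .
qed

subsection \<open>The value equations\<close>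

lemma finite_successor_values:
  assumes "wf_game G"
  shows "finite {f l' | l'. (l, l') \<in> Edges G}"
proof -
  have "finite (Edges G)"
    using assms unfolding wf_game_def by (meson finite_SigmaI finite_subset)
  moreover have "{f l' | l'. (l, l') \<in> Edges G} \<subseteq> (\<lambda>e. f (snd e)) ` Edges G" by force
  ultimately show ?thesis by (meson finite_imageI finite_subset)
qed

text \<open>At a Min location, the optimal cost is minC of the cheapest successor: the commit bound
  says OptCost is a lower bound of the values of minC, the exit bound that it is the greatest one.\<close>
lemma OptCost_Min_location:
  assumes wf: "wf_game G" and fin: "\<forall>s\<in>states G. \<bar>OptCost G s\<bar> \<noteq> \<infinity>"
    and l: "l \<in> Locs G" "l \<in> LMin G" "l \<notin> Goal G" "\<not> urgent G l"
    and e: "(l, l0) \<in> Edges G" and x: "x \<in> {lb G..ub G}"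
  shows "OptCost G (l, x) = ereal (minC (ub G)
           (\<lambda>y. Min {real_of_ereal (OptCost G (l', y)) | l'. (l, l') \<in> Edges G}) (real (rate G l)) x)"
proof -
  let ?g = "\<lambda>l' y. real_of_ereal (OptCost G (l', y))"
  let ?h = "\<lambda>y. Min {?g l' y | l'. (l, l') \<in> Edges G}"
  let ?S = "(\<lambda>t. real (rate G l) * t + ?h (x + t)) ` {0..ub G - x}"
  have succ: "finite {?g l' y | l'. (l, l') \<in> Edges G}" "{?g l' y | l'. (l, l') \<in> Edges G} \<noteq> {}" for y
    using finite_successor_values[OF wf, of "\<lambda>l'. ?g l' y" l] e by auto
  have s0: "(l, x) \<in> states G" using l(1) x by (simp add: states_def)
  have opt: "OptCost G (l', y) = ereal (?g l' y)" if "(l, l') \<in> Edges G" "y \<in> {lb G..ub G}" for l' y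
    using OptCost_finite[OF fin] wf that unfolding states_def wf_game_def by blast
  have "Inf ?S = ?g l x"
  proof (rule cInf_eq_non_empty)
    show "?S \<noteq> {}" using x by auto
  next
    fix z assume "z \<in> ?S"
    then obtain t where t: "0 \<le> t" "x + t \<le> ub G" "z = real (rate G l) * t + ?h (x + t)" by auto
    obtain l' where l': "(l, l') \<in> Edges G" "?h (x + t) = ?g l' (x + t)"
      using Min_in[OF succ] by fastforce
    have xt: "x + t \<in> {lb G..ub G}" using x t by auto
    have "OptCost G (l, x) \<le> ereal (real (rate G l) * t) + OptCost G (l', x + t)"
      using Min_commit_bound[OF wf s0 l(2-4) l'(1) t(1,2)] .
    then have "ereal (?g l x) \<le> ereal (real (rate G l) * t) + ereal (?g l' (x + t))"
      using OptCost_finite[OF fin s0] opt[OF l'(1) xt] by metis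
    then show "?g l x \<le> z" using t(3) l'(2) by simp
  next
    fix m assume lower: "\<And>z. z \<in> ?S \<Longrightarrow> m \<le> z"
    have "ereal m \<le> OptCost G (l, x)"
    proof (rule Min_exit_bound[OF wf s0 l(2,3) e fin])
      fix l' y assume y: "(l, l') \<in> Edges G" "x \<le> y" "y \<le> ub G"
      have "m \<le> real (rate G l) * (y - x) + ?h (x + (y - x))"
        using y by (intro lower image_eqI[where x = "y - x"]) auto
      also have "\<dots> \<le> real (rate G l) * (y - x) + ?g l' y" using Min_le[OF succ(1)] y(1) by auto
      finally show "m \<le> real (rate G l) * (y - x) + ?g l' y" .
    qed
    then show "m \<le> ?g l x" using OptCost_finite[OF fin s0] by (metis ereal_less_eq(3))
  qed
  then show ?thesis using OptCost_finite[OF fin s0] by (simp add: minC_def)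
qed

lemma OptCost_Max_location:
  assumes wf: "wf_game G" and fin: "\<forall>s\<in>states G. \<bar>OptCost G s\<bar> \<noteq> \<infinity>"
    and l: "l \<in> Locs G" "l \<in> LMax G" "l \<notin> Goal G" "\<not> urgent G l"
    and e: "(l, l0) \<in> Edges G" and x: "x \<in> {lb G..ub G}"
  shows "OptCost G (l, x) = ereal (maxC (ub G)
           (\<lambda>y. Max {real_of_ereal (OptCost G (l', y)) | l'. (l, l') \<in> Edges G}) (real (rate G l)) x)"
proof -
  let ?g = "\<lambda>l' y. real_of_ereal (OptCost G (l', y))"
  let ?h = "\<lambda>y. Max {?g l' y | l'. (l, l') \<in> Edges G}"
  let ?S = "(\<lambda>t. real (rate G l) * t + ?h (x + t)) ` {0..ub G - x}"
  have succ: "finite {?g l' y | l'. (l, l') \<in> Edges G}" "{?g l' y | l'. (l, l') \<in> Edges G} \<noteq> {}" for y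
    using finite_successor_values[OF wf, of "\<lambda>l'. ?g l' y" l] e by auto
  have s0: "(l, x) \<in> states G" using l(1) x by (simp add: states_def)
  have opt: "OptCost G (l', y) = ereal (?g l' y)" if "(l, l') \<in> Edges G" "y \<in> {lb G..ub G}" for l' y
    using OptCost_finite[OF fin] wf that unfolding states_def wf_game_def by blast
  have "Sup ?S = ?g l x"
  proof (rule cSup_eq_non_empty)
    show "?S \<noteq> {}" using x by auto
  next
    fix z assume "z \<in> ?S"
    then obtain t where t: "0 \<le> t" "x + t \<le> ub G" "z = real (rate G l) * t + ?h (x + t)" by auto
    obtain l' where l': "(l, l') \<in> Edges G" "?h (x + t) = ?g l' (x + t)"
      using Max_in[OF succ] by fastforce
    have xt: "x + t \<in> {lb G..ub G}" using x t by auto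
    have "ereal (real (rate G l) * t) + OptCost G (l', x + t) \<le> OptCost G (l, x)"
      using Max_commit_bound[OF wf s0 l(2-4) l'(1) t(1,2)] .
    then have "ereal (real (rate G l) * t) + ereal (?g l' (x + t)) \<le> ereal (?g l x)"
      using OptCost_finite[OF fin s0] opt[OF l'(1) xt] by metis
    then show "z \<le> ?g l x" using t(3) l'(2) by simp
  next
    fix M assume upper: "\<And>z. z \<in> ?S \<Longrightarrow> z \<le> M"
    have bound: "real (rate G l) * (y - x) + ?g l' y \<le> M"
      if y: "(l, l') \<in> Edges G" "x \<le> y" "y \<le> ub G" for l' y
    proof -
      have "real (rate G l) * (y - x) + ?g l' y \<le> real (rate G l) * (y - x) + ?h (x + (y - x))"
        using Max_ge[OF succ(1)] y(1) by auto
      also have "\<dots> \<le> M" using y by (intro upper image_eqI[where x = "y - x"]) auto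
      finally show ?thesis .
    qed
    have "?g l x \<le> M + \<epsilon>" if "0 < \<epsilon>" for \<epsilon>
      using Max_exit_bound[OF wf s0 l(2,3) e fin bound that] OptCost_finite[OF fin s0]
      by (metis ereal_less_eq(3))
    then show "?g l x \<le> M" by (rule field_le_epsilon)
  qed
  then show ?thesis using OptCost_finite[OF fin s0] by (simp add: maxC_def)
qed

theorem lemma4:
  fixes G :: "'l game" and l :: 'l
  assumes wf: "wf_game G"
    and fin: "\<forall>s\<in>states G. \<bar>OptCost G s\<bar> \<noteq> \<infinity>"
    and l_loc: "l \<in> Locs G"
    and not_goal: "l \<notin> Goal G"
    and not_urgent: "\<not> urgent G l"
    and has_edge: "\<exists>l'. (l, l') \<in> Edges G"
    and "\<forall>l'. (l, l') \<in> Edges G \<longrightarrow>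
                    cost_function (lb G) (ub G) (\<lambda>x. real_of_ereal (OptCost G (l', x)))"
  shows "(l \<in> LMin G \<longrightarrow> (\<forall>x\<in>{lb G..ub G}.
            OptCost G (l, x) = ereal (minC (ub G)
               (\<lambda>y. Min {real_of_ereal (OptCost G (l', y)) | l'. (l, l') \<in> Edges G})
               (real (rate G l)) x)))
       \<and> (l \<in> LMax G \<longrightarrow> (\<forall>x\<in>{lb G..ub G}.
            OptCost G (l, x) = ereal (maxC (ub G)
               (\<lambda>y. Max {real_of_ereal (OptCost G (l', y)) | l'. (l, l') \<in> Edges G})
               (real (rate G l)) x)))"
proof -
  obtain l0 where e: "(l, l0) \<in> Edges G" using has_edge by blast
  show ?thesis
    using OptCost_Min_location[OF wf fin l_loc _ not_goal not_urgent e]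
      OptCost_Max_location[OF wf fin l_loc _ not_goal not_urgent e] by blast
qed

end
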